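(* Let $G_1$ be a group and $k\ge1$ an integer such that $|G_1:C_{G_1}(a)|\le k$ for every $a\in G_1$. Let $n,m\ge0$, let $G\le G_1^n$ be a subgroup, and let $\mu$ be a left-invariant probability measure on some algebra of subsets of $G$, with inner measure $\mu_*$. Let $w(\bar x,\bar y)$ be a group word in the variables $\bar x=(x_1,\dots,x_n)$, $\bar y=(y_1,\dots,y_m)$ and their inverses, and let $\bar g\in G_1^m$, $c\in G_1$. If $w(\bar h,\bar g)=c$ does not hold for all $\bar h\in G$, then $$\mu_*(\{\bar h\in G:w(\bar h,\bar g)=c\})\le1-\frac1{2k^{n^2+mn}}.$$
   Context: The inner measure is $\mu_*(X)=\sup\{\mu(Y):Y\subseteq X\text{ measurable}\}$. *)

theory Defs
  imports "HOL-Analysis.Analysis" "HOL-Algebra.Coset"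
begin

definition centralizer :: "('a, 'b) monoid_scheme \<Rightarrow> 'a \<Rightarrow> 'a set" where
  "centralizer G a = {x \<in> carrier G. x \<otimes>\<^bsub>G\<^esub> a = a \<otimes>\<^bsub>G\<^esub> x}"

definition pow_group :: "('a, 'b) monoid_scheme \<Rightarrow> nat \<Rightarrow> 'a list monoid" where
  "pow_group G n =
     \<lparr>carrier = {h. length h = n \<and> set h \<subseteq> carrier G},
      mult = (\<lambda>h h'. map2 (\<otimes>\<^bsub>G\<^esub>) h h'),
      one = replicate n \<one>\<^bsub>G\<^esub>\<rparr>"

text \<open>Group words in variables x_1..x_n (XVar i) and y_1..y_m (YVar j) and their inverses.
  A letter (v, True) is the variable v, (v, False) its inverse.\<close>
datatype var = XVar nat | YVar nat

type_synonym word = "(var \<times> bool) list"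

definition word_in_vars :: "nat \<Rightarrow> nat \<Rightarrow> word \<Rightarrow> bool" where
  "word_in_vars n m w \<longleftrightarrow>
     (\<forall>(v, e) \<in> set w. (case v of XVar i \<Rightarrow> i < n | YVar j \<Rightarrow> j < m))"

fun eval_letter :: "('a, 'b) monoid_scheme \<Rightarrow> 'a list \<Rightarrow> 'a list \<Rightarrow> var \<times> bool \<Rightarrow> 'a" where
  "eval_letter G h g (XVar i, e) = (if e then h ! i else inv\<^bsub>G\<^esub> (h ! i))"
| "eval_letter G h g (YVar j, e) = (if e then g ! j else inv\<^bsub>G\<^esub> (g ! j))"

definition eval_word :: "('a, 'b) monoid_scheme \<Rightarrow> word \<Rightarrow> 'a list \<Rightarrow> 'a list \<Rightarrow> 'a" where
  "eval_word G w h g = foldr (\<lambda>l acc. eval_letter G h g l \<otimes>\<^bsub>G\<^esub> acc) w \<one>\<^bsub>G\<^esub>"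

definition prob_measure_on_algebra :: "'a set \<Rightarrow> 'a set set \<Rightarrow> ('a set \<Rightarrow> real) \<Rightarrow> bool" where
  "prob_measure_on_algebra \<Omega> A \<mu> \<longleftrightarrow>
     algebra \<Omega> A \<and>
     (\<forall>X \<in> A. 0 \<le> \<mu> X) \<and>
     (\<forall>X \<in> A. \<forall>Y \<in> A. X \<inter> Y = {} \<longrightarrow> \<mu> (X \<union> Y) = \<mu> X + \<mu> Y) \<and>
     \<mu> \<Omega> = 1"

definition left_invariant :: "('a, 'b) monoid_scheme \<Rightarrow> 'a set \<Rightarrow> 'a set set \<Rightarrow> ('a set \<Rightarrow> real) \<Rightarrow> bool" where
  "left_invariant H \<Omega> A \<mu> \<longleftrightarrow>
     (\<forall>g \<in> \<Omega>. \<forall>X \<in> A. (\<lambda>x. g \<otimes>\<^bsub>H\<^esub> x) ` X \<in> A \<and> \<mu> ((\<lambda>x. g \<otimes>\<^bsub>H\<^esub> x) ` X) = \<mu> X)"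

definition inner_measure :: "'a set set \<Rightarrow> ('a set \<Rightarrow> real) \<Rightarrow> 'a set \<Rightarrow> real" where
  "inner_measure A \<mu> X = Sup {\<mu> Y | Y. Y \<in> A \<and> Y \<subseteq> X}"

end

theory Submission
  imports Defs "HOL-Algebra.Group_Action"
begin

text \<open>
  Fix u \<in> G and put K = k^(n(n+m)). Conjugating the n + m entries of u and g by the
  coordinates of an element of G gives one of at most K patterns, since every conjugacy
  class of G1 has at most k elements; and two elements s, s y of G with the same pattern
  differ by a y whose coordinates centralize u and g. Fix one representative s per pattern
  and suppose a measurable Y \<subseteq> {h. w(h, g) = c} had \<mu>(Y) > 1 - 1/(2K). By a union bound
  on the complements, the at most 2K translates s Y and s u\<inverse> Y have a common point z.
  Writing z = s y with s the representative of the pattern of z, both y and u y lie in Y.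
  Since y centralizes u and g coordinatewise, w(u y, g) = w(u, g) w(y, 1) and
  w(y, g) = w(1, g) w(y, 1), whence w(u, g) = w(1, g). So w(-, g) would be constant,
  equal to c, on G.
\<close>

lemma nth_mem_subset [simp]: "set xs \<subseteq> A \<Longrightarrow> i < length xs \<Longrightarrow> xs ! i \<in> A"
  by (meson nth_mem subsetD)

lemma (in group) centralizer_subgroup:
  assumes "a \<in> carrier G"
  shows "subgroup (centralizer G a) G"
proof (rule subgroupI)
  fix x assume "x \<in> centralizer G a"
  then have x: "x \<in> carrier G" "x \<otimes> a = a \<otimes> x" by (auto simp: centralizer_def)
  have "inv x \<otimes> a = inv x \<otimes> (a \<otimes> x) \<otimes> inv x"
    using x assms by (simp add: m_assoc)
  also have "\<dots> = a \<otimes> inv x"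
    using x assms by (metis inv_closed l_inv l_one m_assoc)
  finally show "inv x \<in> centralizer G a"
    using x by (simp add: centralizer_def)
next
  fix x y assume "x \<in> centralizer G a" "y \<in> centralizer G a"
  then show "x \<otimes> y \<in> centralizer G a"
    using assms by (simp add: centralizer_def) (metis m_assoc)
qed (use assms in \<open>auto simp: centralizer_def\<close>)

lemma (in group) mem_centralizer_commute:
  "x \<in> carrier G \<Longrightarrow> a \<in> carrier G \<Longrightarrow> x \<in> centralizer G a \<longleftrightarrow> a \<in> centralizer G x"
  by (auto simp: centralizer_def)

lemma (in group) centralizer_one: "centralizer G \<one> = carrier G"
  by (auto simp: centralizer_def)

lemma (in group) conj_eq_iff_mem_centralizer:
  "g \<in> carrier G \<Longrightarrow> b \<in> carrier G \<Longrightarrow> g \<otimes> b \<otimes> inv g = b \<longleftrightarrow> g \<in> centralizer G b"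
  using inv_solve_right'[of b "g \<otimes> b" g] by (auto simp: centralizer_def)

lemma (in group) conj_mult_eq_imp_mem_centralizer:
  assumes "p \<in> carrier G" "q \<in> carrier G" "a \<in> carrier G"
    and "(p \<otimes> q) \<otimes> a \<otimes> inv (p \<otimes> q) = p \<otimes> a \<otimes> inv p"
  shows "q \<in> centralizer G a"
proof -
  have "p \<otimes> (q \<otimes> a \<otimes> inv q) \<otimes> inv p = (p \<otimes> q) \<otimes> a \<otimes> inv (p \<otimes> q)"
    using assms(1-3) by (simp add: inv_mult_group m_assoc)
  also have "\<dots> = p \<otimes> a \<otimes> inv p" by (rule assms(4))
  finally have "q \<otimes> a \<otimes> inv q = a"
    using conjugation_is_inj[OF assms(1) _ assms(3)] assms(2,3) by simp
  then show ?thesis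
    using assms(2,3) conj_eq_iff_mem_centralizer by blast
qed

definition conj_class :: "('a, 'b) monoid_scheme \<Rightarrow> 'a \<Rightarrow> 'a set" where
  "conj_class G b = {g \<otimes>\<^bsub>G\<^esub> b \<otimes>\<^bsub>G\<^esub> inv\<^bsub>G\<^esub> g | g. g \<in> carrier G}"

lemma conj_in_conj_class: "g \<in> carrier G \<Longrightarrow> g \<otimes>\<^bsub>G\<^esub> a \<otimes>\<^bsub>G\<^esub> inv\<^bsub>G\<^esub> g \<in> conj_class G a"
  unfolding conj_class_def by (intro CollectI exI[of _ g]) simp

text \<open>Orbit-stabilizer for the conjugation action; no finiteness of G is needed.\<close>
lemma (in group)
  assumes "b \<in> carrier G"
  shows finite_conj_class_iff: "finite (conj_class G b) \<longleftrightarrow> finite (rcosets (centralizer G b))"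
    and card_conj_class: "card (conj_class G b) = card (rcosets (centralizer G b))"
proof -
  define \<phi> where "\<phi> g = (\<lambda>h \<in> carrier G. g \<otimes> h \<otimes> inv g)" for g
  interpret group_action G "carrier G" \<phi>
    unfolding \<phi>_def by (rule action_by_conjugation)
  have "stabilizer G \<phi> b = centralizer G b"
    using assms by (auto simp: stabilizer_def \<phi>_def conj_eq_iff_mem_centralizer)
      (auto simp: centralizer_def m_assoc)
  moreover have "orbit G \<phi> b = conj_class G b"
    using assms by (auto simp: orbit_def \<phi>_def conj_class_def)
  ultimately have "\<exists>f. bij_betw f (rcosets (centralizer G b)) (conj_class G b)"
    using orbit_stab_fun_is_bij[OF assms] by auto
  then show "finite (conj_class G b) \<longleftrightarrow> finite (rcosets (centralizer G b))"
    and "card (conj_class G b) = card (rcosets (centralizer G b))"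
    using bij_betw_finite bij_betw_same_card by metis+
qed

lemma pow_group_carrier: "carrier (pow_group G n) = {h. length h = n \<and> set h \<subseteq> carrier G}"
  and pow_group_mult: "x \<otimes>\<^bsub>pow_group G n\<^esub> y = map2 (\<otimes>\<^bsub>G\<^esub>) x y"
  and pow_group_one: "\<one>\<^bsub>pow_group G n\<^esub> = replicate n \<one>\<^bsub>G\<^esub>"
  by (simp_all add: pow_group_def)

lemma (in group) pow_group_is_group: "group (pow_group G n)"
proof (rule groupI)
  fix x y z
  assume x: "x \<in> carrier (pow_group G n)" and y: "y \<in> carrier (pow_group G n)"
  then show "x \<otimes>\<^bsub>pow_group G n\<^esub> y \<in> carrier (pow_group G n)"
    by (auto simp: pow_group_carrier pow_group_mult set_zip intro!: m_closed)
  assume "z \<in> carrier (pow_group G n)"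
  with x y show "x \<otimes>\<^bsub>pow_group G n\<^esub> y \<otimes>\<^bsub>pow_group G n\<^esub> z =
                 x \<otimes>\<^bsub>pow_group G n\<^esub> (y \<otimes>\<^bsub>pow_group G n\<^esub> z)"
    by (auto simp: pow_group_carrier pow_group_mult m_assoc intro!: nth_equalityI)
next
  fix x assume x: "x \<in> carrier (pow_group G n)"
  then show "\<one>\<^bsub>pow_group G n\<^esub> \<otimes>\<^bsub>pow_group G n\<^esub> x = x"
    by (auto simp: pow_group_carrier pow_group_mult pow_group_one intro!: nth_equalityI)
  have "map (m_inv G) x \<otimes>\<^bsub>pow_group G n\<^esub> x = \<one>\<^bsub>pow_group G n\<^esub>"
    using x by (auto simp: pow_group_carrier pow_group_mult pow_group_one intro!: nth_equalityI)
  moreover have "map (m_inv G) x \<in> carrier (pow_group G n)"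
    using x by (auto simp: pow_group_carrier)
  ultimately show "\<exists>y\<in>carrier (pow_group G n). y \<otimes>\<^bsub>pow_group G n\<^esub> x = \<one>\<^bsub>pow_group G n\<^esub>"
    by blast
qed (simp add: pow_group_carrier pow_group_one set_replicate_conv_if)

lemma nth_pow_group_mult:
  "x \<in> carrier (pow_group G n) \<Longrightarrow> y \<in> carrier (pow_group G n) \<Longrightarrow> i < n \<Longrightarrow>
   (x \<otimes>\<^bsub>pow_group G n\<^esub> y) ! i = x ! i \<otimes>\<^bsub>G\<^esub> y ! i"
  by (simp add: pow_group_carrier pow_group_mult)

lemma word_in_vars_Cons:
  "word_in_vars n m ((v, e) # w) \<longleftrightarrow>
     (case v of XVar i \<Rightarrow> i < n | YVar j \<Rightarrow> j < m) \<and> word_in_vars n m w"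
  by (simp add: word_in_vars_def)

lemma eval_word_Nil [simp]: "eval_word G [] h g = \<one>\<^bsub>G\<^esub>"
  and eval_word_Cons [simp]: "eval_word G (l # w) h g = eval_letter G h g l \<otimes>\<^bsub>G\<^esub> eval_word G w h g"
  by (simp_all add: eval_word_def)

lemma (in group) eval_letter_in_subgroup:
  assumes H: "subgroup H G" and v: "case v of XVar i \<Rightarrow> i < length h | YVar j \<Rightarrow> j < length g"
    and "set h \<subseteq> H" "set g \<subseteq> H"
  shows "eval_letter G h g (v, e) \<in> H"
  using assms(3,4) v by (cases v) (auto simp: subgroup.m_inv_closed[OF H])

lemma (in group) eval_word_in_subgroup:
  assumes H: "subgroup H G" and "word_in_vars n m w"
    and "length h = n" "set h \<subseteq> H" "length g = m" "set g \<subseteq> H"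
  shows "eval_word G w h g \<in> H"
  using assms(2)
proof (induction w)
  case Nil
  show ?case using subgroup.one_closed[OF H] by simp
next
  case (Cons l w)
  obtain v e where l: "l = (v, e)" by fastforce
  have "eval_letter G h g l \<in> H"
    using Cons.prems assms(3-6) by (auto simp: l word_in_vars_Cons intro!: eval_letter_in_subgroup[OF H])
  then show ?case
    using Cons subgroup.m_closed[OF H] by (simp add: l word_in_vars_Cons)
qed

lemma (in group) mem_centralizer_eval_word:
  assumes "word_in_vars n m w" "length h = n" "length g = m"
    and x: "x \<in> carrier G" and "set h \<union> set g \<subseteq> centralizer G x"
  shows "x \<in> centralizer G (eval_word G w h g)"
proof -
  have "eval_word G w h g \<in> centralizer G x"
    using assms by (intro eval_word_in_subgroup[OF centralizer_subgroup[OF x]]) auto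
  then show ?thesis
    using x mem_centralizer_commute by (auto simp: centralizer_def)
qed

lemma (in group) eval_letter_map2_mult:
  assumes v: "case v of XVar i \<Rightarrow> i < n | YVar j \<Rightarrow> j < m"
    and u: "length u = n" "set u \<subseteq> carrier G"
    and d: "length d = n" "set d \<subseteq> carrier G"
    and g: "length g = m" "set g \<subseteq> carrier G"
    and centr: "\<forall>a \<in> set u \<union> set g. set d \<subseteq> centralizer G a"
  shows "eval_letter G (map2 (\<otimes>) u d) g (v, e) =
         eval_letter G u g (v, e) \<otimes> eval_letter G d (replicate m \<one>) (v, e)"
proof (cases v)
  case (XVar i)
  with v u d have "u ! i \<in> set u" "d ! i \<in> set d" by auto
  with centr have "d ! i \<in> centralizer G (u ! i)" by blast
  with \<open>u ! i \<in> set u\<close> u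
  have "u ! i \<in> carrier G" "d ! i \<in> carrier G" "u ! i \<otimes> d ! i = d ! i \<otimes> u ! i"
    by (auto simp: centralizer_def)
  then show ?thesis
    using XVar v u d by (auto simp: inv_mult_group)
next
  case (YVar j)
  then show ?thesis using v g by auto
qed

lemma (in monoid) mult_interchange:
  "\<lbrakk>a \<in> carrier G; b \<in> carrier G; x \<in> carrier G; y \<in> carrier G; b \<otimes> x = x \<otimes> b\<rbrakk>
   \<Longrightarrow> (a \<otimes> b) \<otimes> (x \<otimes> y) = (a \<otimes> x) \<otimes> (b \<otimes> y)"
  by (metis m_assoc m_closed)

lemma (in group) eval_word_map2_mult:
  assumes w: "word_in_vars n m w"
    and u: "length u = n" "set u \<subseteq> carrier G"
    and d: "length d = n" "set d \<subseteq> carrier G"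
    and g: "length g = m" "set g \<subseteq> carrier G"
    and centr: "\<forall>a \<in> set u \<union> set g. set d \<subseteq> centralizer G a"
  shows "eval_word G w (map2 (\<otimes>) u d) g = eval_word G w u g \<otimes> eval_word G w d (replicate m \<one>)"
  using w
proof (induction w)
  case (Cons l w)
  obtain v e where l: "l = (v, e)" by fastforce
  have v: "case v of XVar i \<Rightarrow> i < n | YVar j \<Rightarrow> j < m" and w': "word_in_vars n m w"
    using Cons.prems by (simp_all add: l word_in_vars_Cons)
  define E where "E = eval_word G w u g"
  define E' where "E' = eval_word G w d (replicate m \<one>)"
  define a where "a = eval_letter G u g l"
  define b where "b = eval_letter G d (replicate m \<one>) l"
  have E: "E \<in> carrier G" "E' \<in> carrier G"
    unfolding E_def E'_def using u d g by (auto intro!: eval_word_in_subgroup[OF subgroup_self w'])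
  have "set d \<subseteq> centralizer G E"
  proof
    fix x assume "x \<in> set d"
    with d centr u g have "x \<in> carrier G" "set u \<union> set g \<subseteq> centralizer G x"
      using mem_centralizer_commute by blast+
    then show "x \<in> centralizer G E"
      unfolding E_def using mem_centralizer_eval_word[OF w' u(1) g(1)] by blast
  qed
  then have "b \<in> centralizer G E"
    unfolding b_def l using v d
    by (intro eval_letter_in_subgroup[OF centralizer_subgroup[OF E(1)]])
      (auto simp: subgroup.one_closed[OF centralizer_subgroup[OF E(1)]] split: var.splits)
  then have b: "b \<in> carrier G" "b \<otimes> E = E \<otimes> b" by (simp_all add: centralizer_def)
  have a: "a \<in> carrier G"
    unfolding a_def l using eval_letter_in_subgroup[OF subgroup_self] v u g by auto
  have "eval_letter G (map2 (\<otimes>) u d) g l = a \<otimes> b"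
    unfolding a_def b_def l by (rule eval_letter_map2_mult[OF v u d g centr])
  then have "eval_word G (l # w) (map2 (\<otimes>) u d) g = (a \<otimes> b) \<otimes> (E \<otimes> E')"
    using Cons.IH w' by (simp add: E_def E'_def)
  also have "\<dots> = (a \<otimes> E) \<otimes> (b \<otimes> E')"
    using a b E by (simp add: mult_interchange)
  finally show ?case by (simp add: a_def b_def E_def E'_def)
qed simp

lemma (in group) eval_word_eq_one_of_centralizing_translate:
  assumes w: "word_in_vars n m w" and g: "length g = m" "set g \<subseteq> carrier G"
    and u: "u \<in> carrier (pow_group G n)" and y: "y \<in> carrier (pow_group G n)"
    and centr: "\<forall>a \<in> set u \<union> set g. set y \<subseteq> centralizer G a"
    and eq: "eval_word G w (u \<otimes>\<^bsub>pow_group G n\<^esub> y) g = eval_word G w y g"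
  shows "eval_word G w u g = eval_word G w \<one>\<^bsub>pow_group G n\<^esub> g"
proof -
  interpret P: group "pow_group G n" by (rule pow_group_is_group)
  define one where "one = \<one>\<^bsub>pow_group G n\<^esub>"
  have u': "length u = n" "set u \<subseteq> carrier G" and y': "length y = n" "set y \<subseteq> carrier G"
    using u y by (auto simp: pow_group_carrier)
  have one: "length one = n" "set one \<subseteq> carrier G" "\<forall>a \<in> set one \<union> set g. set y \<subseteq> centralizer G a"
    using centr y' by (auto simp: one_def pow_group_one centralizer_one)
  define E' where "E' = eval_word G w y (replicate m \<one>)"
  have "eval_word G w u g \<otimes> E' = eval_word G w (u \<otimes>\<^bsub>pow_group G n\<^esub> y) g"
    using eval_word_map2_mult[OF w u' y' g centr] by (simp add: E'_def pow_group_mult)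
  also have "\<dots> = eval_word G w (one \<otimes>\<^bsub>pow_group G n\<^esub> y) g"
    using eq y by (simp add: one_def)
  also have "\<dots> = eval_word G w one g \<otimes> E'"
    using eval_word_map2_mult[OF w one(1,2) y' g one(3)] by (simp add: E'_def pow_group_mult)
  finally have "eval_word G w u g \<otimes> E' = eval_word G w one g \<otimes> E'" .
  moreover have "eval_word G w u g \<in> carrier G" "eval_word G w one g \<in> carrier G" "E' \<in> carrier G"
    unfolding E'_def using u' y' one g by (auto intro!: eval_word_in_subgroup[OF subgroup_self w])
  ultimately show ?thesis by (simp add: one_def)
qed

definition conj_pattern :: "('a, 'b) monoid_scheme \<Rightarrow> nat \<Rightarrow> 'a list \<Rightarrow> 'a list \<Rightarrow> nat \<times> nat \<Rightarrow> 'a" where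
  "conj_pattern G n b z = (\<lambda>(i, j) \<in> {..<n} \<times> {..<length b}. z ! i \<otimes>\<^bsub>G\<^esub> b ! j \<otimes>\<^bsub>G\<^esub> inv\<^bsub>G\<^esub> (z ! i))"

lemma (in group) conj_patterns_finite:
  assumes b: "set b \<subseteq> carrier G"
    and bounded: "\<forall>a \<in> set b. finite (conj_class G a) \<and> card (conj_class G a) \<le> k"
  shows "finite (conj_pattern G n b ` carrier (pow_group G n))
         \<and> card (conj_pattern G n b ` carrier (pow_group G n)) \<le> k ^ (n * length b)"
proof -
  define I where "I = {..<n} \<times> {..<length b}"
  define C where "C = (\<Pi>\<^sub>E p \<in> I. conj_class G (b ! snd p))"
  have class_bounded: "finite (conj_class G (b ! snd p))" "card (conj_class G (b ! snd p)) \<le> k"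
    if "p \<in> I" for p
    using bounded that by (auto simp: I_def)
  have "conj_pattern G n b x \<in> C" if "x \<in> carrier (pow_group G n)" for x
    unfolding C_def conj_pattern_def restrict_PiE_iff
    using that by (auto simp: I_def pow_group_carrier intro!: conj_in_conj_class)
  then have sub: "conj_pattern G n b ` carrier (pow_group G n) \<subseteq> C" by blast
  have fin: "finite C"
    unfolding C_def by (rule finite_PiE) (simp_all add: I_def class_bounded)
  have "card C = (\<Prod>p \<in> I. card (conj_class G (b ! snd p)))"
    unfolding C_def by (rule card_PiE) (simp add: I_def)
  also have "\<dots> \<le> (\<Prod>p \<in> I. k)"
    by (rule prod_mono) (simp add: class_bounded)
  also have "\<dots> = k ^ (n * length b)"
    by (simp add: I_def card_cartesian_product)
  finally show ?thesis
    using finite_subset[OF sub fin] card_mono[OF fin sub] by simp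
qed

lemma (in group) conj_pattern_mult_eq_imp_centralizer:
  assumes s: "s \<in> carrier (pow_group G n)" and y: "y \<in> carrier (pow_group G n)"
    and b: "set b \<subseteq> carrier G"
    and eq: "conj_pattern G n b (s \<otimes>\<^bsub>pow_group G n\<^esub> y) = conj_pattern G n b s"
  shows "\<forall>a \<in> set b. set y \<subseteq> centralizer G a"
proof (intro ballI subsetI)
  fix a x assume "a \<in> set b" "x \<in> set y"
  then obtain i j where i: "i < n" "x = y ! i" and j: "j < length b" "a = b ! j"
    using y by (auto simp: in_set_conv_nth pow_group_carrier)
  have "conj_pattern G n b (s \<otimes>\<^bsub>pow_group G n\<^esub> y) (i, j) = conj_pattern G n b s (i, j)"
    using eq by simp
  then have "(s ! i \<otimes> x) \<otimes> a \<otimes> inv (s ! i \<otimes> x) = s ! i \<otimes> a \<otimes> inv (s ! i)"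
    using i j s y by (simp add: conj_pattern_def nth_pow_group_mult)
  moreover have "s ! i \<in> carrier G" "x \<in> carrier G" "a \<in> carrier G"
    using i j s y b by (auto simp: pow_group_carrier)
  ultimately show "x \<in> centralizer G a"
    by (rule conj_mult_eq_imp_mem_centralizer[rotated 3])
qed

lemma (in group) conj_pattern_representatives:
  assumes H: "subgroup H (pow_group G n)" and b: "set b \<subseteq> carrier G"
    and bounded: "\<forall>a \<in> set b. finite (conj_class G a) \<and> card (conj_class G a) \<le> k"
  shows "\<exists>S \<subseteq> H. finite S \<and> card S \<le> k ^ (n * length b) \<and>
           (\<forall>z \<in> H. \<exists>s \<in> S. \<exists>y \<in> H. z = s \<otimes>\<^bsub>pow_group G n\<^esub> y \<and> (\<forall>a \<in> set b. set y \<subseteq> centralizer G a))"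
proof -
  interpret P: group "pow_group G n" by (rule pow_group_is_group)
  let ?\<pi> = "conj_pattern G n b"
  have HP: "H \<subseteq> carrier (pow_group G n)" using subgroup.subset[OF H] .
  obtain fin: "finite (?\<pi> ` carrier (pow_group G n))"
    and card: "card (?\<pi> ` carrier (pow_group G n)) \<le> k ^ (n * length b)"
    using conj_patterns_finite[OF b bounded] by blast
  have sub: "?\<pi> ` H \<subseteq> ?\<pi> ` carrier (pow_group G n)" using HP by blast
  have "finite (?\<pi> ` H)" using finite_subset[OF sub fin] .
  have "card (?\<pi> ` H) \<le> k ^ (n * length b)" using card_mono[OF fin sub] card by linarith
  define S where "S = inv_into H ?\<pi> ` ?\<pi> ` H"
  have "S \<subseteq> H" by (auto simp: S_def inv_into_into)
  moreover have "finite S" "card S \<le> k ^ (n * length b)"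
    using \<open>finite (?\<pi> ` H)\<close> \<open>card (?\<pi> ` H) \<le> _\<close> card_image_le[of "?\<pi> ` H" "inv_into H ?\<pi>"]
    by (simp_all add: S_def)
  moreover have "\<exists>s \<in> S. \<exists>y \<in> H. z = s \<otimes>\<^bsub>pow_group G n\<^esub> y \<and> (\<forall>a \<in> set b. set y \<subseteq> centralizer G a)"
    if z: "z \<in> H" for z
  proof -
    define s where "s = inv_into H ?\<pi> (?\<pi> z)"
    define y where "y = inv\<^bsub>pow_group G n\<^esub> s \<otimes>\<^bsub>pow_group G n\<^esub> z"
    have s: "s \<in> S" "s \<in> H" "?\<pi> s = ?\<pi> z"
      using z by (auto simp: s_def S_def inv_into_into f_inv_into_f)
    have "y \<in> H"
      using s z H by (simp add: y_def subgroup.m_closed subgroup.m_inv_closed)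
    moreover have "z = s \<otimes>\<^bsub>pow_group G n\<^esub> y"
      using s(2) z HP by (auto simp: y_def P.m_assoc[symmetric] subset_iff)
    moreover have "\<forall>a \<in> set b. set y \<subseteq> centralizer G a"
    proof (rule conj_pattern_mult_eq_imp_centralizer[OF _ _ b])
      show "s \<in> carrier (pow_group G n)" "y \<in> carrier (pow_group G n)"
        using s(2) \<open>y \<in> H\<close> HP by auto
      show "?\<pi> (s \<otimes>\<^bsub>pow_group G n\<^esub> y) = ?\<pi> s"
        using s(3) \<open>z = _\<close> by metis
    qed
    ultimately show ?thesis
      using s(1) by (intro bexI[of _ s] bexI[of _ y]) simp_all
  qed
  ultimately show ?thesis by (intro exI[of _ S]) blast
qed

lemma prob_measure_on_algebraD:
  assumes "prob_measure_on_algebra \<Omega> A \<mu>"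
  shows "algebra \<Omega> A" and "X \<in> A \<Longrightarrow> 0 \<le> \<mu> X"
    and "X \<in> A \<Longrightarrow> Y \<in> A \<Longrightarrow> X \<inter> Y = {} \<Longrightarrow> \<mu> (X \<union> Y) = \<mu> X + \<mu> Y"
    and "\<mu> \<Omega> = 1"
  using assms by (auto simp: prob_measure_on_algebra_def)

lemma prob_measure_on_algebra_empty:
  assumes pm: "prob_measure_on_algebra \<Omega> A \<mu>"
  shows "\<mu> {} = 0"
proof -
  interpret algebra \<Omega> A by (rule prob_measure_on_algebraD(1)[OF pm])
  have "\<mu> ({} \<union> {}) = \<mu> {} + \<mu> {}"
    by (rule prob_measure_on_algebraD(3)[OF pm]) auto
  then show ?thesis by simp
qed

lemma prob_measure_on_algebra_subadditive:
  assumes pm: "prob_measure_on_algebra \<Omega> A \<mu>" and I: "finite I" "F ` I \<subseteq> A"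
  shows "\<mu> (\<Union>i\<in>I. F i) \<le> (\<Sum>i\<in>I. \<mu> (F i))"
proof -
  interpret algebra \<Omega> A by (rule prob_measure_on_algebraD(1)[OF pm])
  have nonneg: "0 \<le> \<mu> (F i)" if "i \<in> I" for i
    using I that by (auto intro: prob_measure_on_algebraD(2)[OF pm])
  have "positive A (\<lambda>X. ennreal (\<mu> X))"
    by (simp add: positive_def prob_measure_on_algebra_empty[OF pm])
  moreover have "additive A (\<lambda>X. ennreal (\<mu> X))"
    by (auto simp: additive_def prob_measure_on_algebraD[OF pm])
  ultimately have "ennreal (\<mu> (\<Union>i\<in>I. F i)) \<le> (\<Sum>i\<in>I. ennreal (\<mu> (F i)))"
    using subadditive I by blast
  also have "\<dots> = ennreal (\<Sum>i\<in>I. \<mu> (F i))"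
    by (rule sum_ennreal) (rule nonneg)
  finally show ?thesis
    using nonneg by (simp add: sum_nonneg)
qed

lemma prob_measure_on_algebra_Inter_nonempty:
  assumes pm: "prob_measure_on_algebra \<Omega> A \<mu>" and I: "finite I" "F ` I \<subseteq> A"
    and small: "(\<Sum>i\<in>I. 1 - \<mu> (F i)) < 1"
  shows "\<exists>z \<in> \<Omega>. \<forall>i \<in> I. z \<in> F i"
proof (rule ccontr)
  interpret algebra \<Omega> A by (rule prob_measure_on_algebraD(1)[OF pm])
  assume "\<not> ?thesis"
  then have cover: "\<Omega> = (\<Union>i\<in>I. \<Omega> - F i)" by blast
  have compl: "\<mu> (\<Omega> - F i) = 1 - \<mu> (F i)" if "i \<in> I" for i
  proof -
    have "F i \<in> A" using I that by blast
    then have "\<mu> (F i \<union> (\<Omega> - F i)) = \<mu> (F i) + \<mu> (\<Omega> - F i)"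
      by (intro prob_measure_on_algebraD(3)[OF pm] compl_sets) auto
    moreover have "F i \<union> (\<Omega> - F i) = \<Omega>" using sets_into_space \<open>F i \<in> A\<close> by blast
    ultimately show ?thesis using prob_measure_on_algebraD(4)[OF pm] by simp
  qed
  have "1 = \<mu> (\<Union>i\<in>I. \<Omega> - F i)"
    unfolding cover[symmetric] using prob_measure_on_algebraD(4)[OF pm] by simp
  also have "\<dots> \<le> (\<Sum>i\<in>I. \<mu> (\<Omega> - F i))"
    using I by (intro prob_measure_on_algebra_subadditive[OF pm]) auto
  also have "\<dots> = (\<Sum>i\<in>I. 1 - \<mu> (F i))"
    by (rule sum.cong) (simp_all add: compl)
  finally show False using small by simp
qed

lemma left_invariant_translates_meet:
  assumes pm: "prob_measure_on_algebra \<Omega> A \<mu>" and li: "left_invariant H \<Omega> A \<mu>"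
    and T: "finite T" "T \<subseteq> \<Omega>" and Y: "Y \<in> A"
    and small: "real (card T) * (1 - \<mu> Y) < 1"
  shows "\<exists>z \<in> \<Omega>. \<forall>t \<in> T. z \<in> (\<lambda>x. t \<otimes>\<^bsub>H\<^esub> x) ` Y"
proof (rule prob_measure_on_algebra_Inter_nonempty[OF pm T(1)])
  have translate: "(\<lambda>x. t \<otimes>\<^bsub>H\<^esub> x) ` Y \<in> A \<and> \<mu> ((\<lambda>x. t \<otimes>\<^bsub>H\<^esub> x) ` Y) = \<mu> Y" if "t \<in> T" for t
    using li T(2) Y that by (auto simp: left_invariant_def)
  then show "(\<lambda>t. (\<lambda>x. t \<otimes>\<^bsub>H\<^esub> x) ` Y) ` T \<subseteq> A" by blast
  have "(\<Sum>t\<in>T. 1 - \<mu> ((\<lambda>x. t \<otimes>\<^bsub>H\<^esub> x) ` Y)) = real (card T) * (1 - \<mu> Y)"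
    using translate by simp
  with small show "(\<Sum>t\<in>T. 1 - \<mu> ((\<lambda>x. t \<otimes>\<^bsub>H\<^esub> x) ` Y)) < 1" by simp
qed

lemma (in group) mem_translates_cancel:
  assumes "s \<in> carrier G" "u \<in> carrier G" "y \<in> carrier G" "Y \<subseteq> carrier G"
    and "s \<otimes> y \<in> (\<lambda>x. s \<otimes> x) ` Y" "s \<otimes> y \<in> (\<lambda>x. (s \<otimes> inv u) \<otimes> x) ` Y"
  shows "y \<in> Y" "u \<otimes> y \<in> Y"
proof -
  show "y \<in> Y" using assms(1,3-5) by auto
  from assms(6) obtain y' where "y' \<in> Y" "s \<otimes> y = (s \<otimes> inv u) \<otimes> y'" by blast
  then have "y = inv u \<otimes> y'" using assms(1-4) by (auto simp: m_assoc)
  then have "y' = u \<otimes> y" using inv_solve_left[OF assms(3,2)] \<open>y' \<in> Y\<close> assms(4) by blast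
  with \<open>y' \<in> Y\<close> show "u \<otimes> y \<in> Y" by simp
qed

lemma (in group) large_subset_contains_centralizing_translate:
  assumes k: "k \<ge> 1"
    and bounded: "\<forall>a \<in> carrier G. finite (conj_class G a) \<and> card (conj_class G a) \<le> k"
    and H: "subgroup H (pow_group G n)"
    and pm: "prob_measure_on_algebra H A \<mu>" and li: "left_invariant (pow_group G n) H A \<mu>"
    and g: "set g \<subseteq> carrier G" and u: "u \<in> H"
    and Y: "Y \<in> A" and large: "1 - 1 / (2 * real k ^ (n * (n + length g))) < \<mu> Y"
  shows "\<exists>y \<in> Y. u \<otimes>\<^bsub>pow_group G n\<^esub> y \<in> Y \<and> (\<forall>a \<in> set u \<union> set g. set y \<subseteq> centralizer G a)"
proof -
  interpret P: group "pow_group G n" by (rule pow_group_is_group)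
  interpret algebra H A by (rule prob_measure_on_algebraD(1)[OF pm])
  have HP: "H \<subseteq> carrier (pow_group G n)" using subgroup.subset[OF H] .
  have u': "length u = n" "set (u @ g) \<subseteq> carrier G" using u HP g by (auto simp: pow_group_carrier)
  define K where "K = k ^ (n * (n + length g))"
  have "\<forall>a \<in> set (u @ g). finite (conj_class G a) \<and> card (conj_class G a) \<le> k"
    using bounded u'(2) by blast
  then have "\<exists>S \<subseteq> H. finite S \<and> card S \<le> K \<and> (\<forall>z \<in> H. \<exists>s \<in> S. \<exists>y \<in> H.
          z = s \<otimes>\<^bsub>pow_group G n\<^esub> y \<and> (\<forall>a \<in> set (u @ g). set y \<subseteq> centralizer G a))"
    using conj_pattern_representatives[OF H u'(2)] by (simp add: K_def u'(1))
  then obtain S where S: "S \<subseteq> H" "finite S" "card S \<le> K"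
    and rep: "\<forall>z \<in> H. \<exists>s \<in> S. \<exists>y \<in> H. z = s \<otimes>\<^bsub>pow_group G n\<^esub> y
                                     \<and> (\<forall>a \<in> set (u @ g). set y \<subseteq> centralizer G a)"
    by blast
  define T where "T = S \<union> (\<lambda>s. s \<otimes>\<^bsub>pow_group G n\<^esub> inv\<^bsub>pow_group G n\<^esub> u) ` S"
  have "T \<subseteq> H" "finite T"
    using S u H by (auto simp: T_def subgroup.m_closed subgroup.m_inv_closed)
  have "card T \<le> card S + card ((\<lambda>s. s \<otimes>\<^bsub>pow_group G n\<^esub> inv\<^bsub>pow_group G n\<^esub> u) ` S)"
    unfolding T_def by (rule card_Un_le)
  also have "\<dots> \<le> 2 * K"
    using card_image_le[OF S(2), of "\<lambda>s. s \<otimes>\<^bsub>pow_group G n\<^esub> inv\<^bsub>pow_group G n\<^esub> u"] S(3)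
    by linarith
  finally have "card T \<le> 2 * K" .
  have "2 * real K * (1 - \<mu> Y) < 1"
    using large k by (simp add: K_def field_simps)
  have "real (card T) * (1 - \<mu> Y) < 1"
  proof (cases "\<mu> Y \<le> 1")
    case True
    then have "real (card T) * (1 - \<mu> Y) \<le> 2 * real K * (1 - \<mu> Y)"
      using \<open>card T \<le> 2 * K\<close> by (intro mult_right_mono) auto
    with \<open>2 * real K * (1 - \<mu> Y) < 1\<close> show ?thesis by linarith
  next
    case False
    then have "real (card T) * (1 - \<mu> Y) \<le> 0" by (intro mult_nonneg_nonpos) auto
    then show ?thesis by linarith
  qed
  then obtain z where "z \<in> H" and z: "\<forall>t \<in> T. z \<in> (\<lambda>x. t \<otimes>\<^bsub>pow_group G n\<^esub> x) ` Y"
    using left_invariant_translates_meet[OF pm li \<open>finite T\<close> \<open>T \<subseteq> H\<close> Y] by blast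
  then obtain s y where s: "s \<in> S" and "y \<in> H" and zsy: "z = s \<otimes>\<^bsub>pow_group G n\<^esub> y"
    and centr: "\<forall>a \<in> set (u @ g). set y \<subseteq> centralizer G a"
    using rep by blast
  have "s \<in> T" "s \<otimes>\<^bsub>pow_group G n\<^esub> inv\<^bsub>pow_group G n\<^esub> u \<in> T"
    using s by (auto simp: T_def)
  with z have in_translates: "s \<otimes>\<^bsub>pow_group G n\<^esub> y \<in> (\<lambda>x. s \<otimes>\<^bsub>pow_group G n\<^esub> x) ` Y"
    "s \<otimes>\<^bsub>pow_group G n\<^esub> y \<in> (\<lambda>x. (s \<otimes>\<^bsub>pow_group G n\<^esub> inv\<^bsub>pow_group G n\<^esub> u) \<otimes>\<^bsub>pow_group G n\<^esub> x) ` Y"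
    unfolding zsy by simp_all
  have carriers: "s \<in> carrier (pow_group G n)" "u \<in> carrier (pow_group G n)"
    "y \<in> carrier (pow_group G n)" "Y \<subseteq> carrier (pow_group G n)"
    using s S(1) u \<open>y \<in> H\<close> sets_into_space[OF Y] HP by auto
  show ?thesis
    using P.mem_translates_cancel[OF carriers in_translates] centr by auto
qed

lemma (in group) eval_word_constant_on_large_subset:
  assumes k: "k \<ge> 1"
    and bounded: "\<forall>a \<in> carrier G. finite (conj_class G a) \<and> card (conj_class G a) \<le> k"
    and H: "subgroup H (pow_group G n)"
    and pm: "prob_measure_on_algebra H A \<mu>" and li: "left_invariant (pow_group G n) H A \<mu>"
    and w: "word_in_vars n m w" and g: "length g = m" "set g \<subseteq> carrier G"
    and Y: "Y \<in> A" "Y \<subseteq> {h \<in> H. eval_word G w h g = c}"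
    and large: "1 - 1 / (2 * real k ^ (n * (n + m))) < \<mu> Y"
  shows "\<forall>h \<in> H. eval_word G w h g = c"
proof -
  have HP: "H \<subseteq> carrier (pow_group G n)" using subgroup.subset[OF H] .
  have large': "1 - 1 / (2 * real k ^ (n * (n + length g))) < \<mu> Y" using large g(1) by simp
  note pair = large_subset_contains_centralizing_translate[OF k bounded H pm li g(2) _ Y(1) large']
  have const: "eval_word G w u g = eval_word G w \<one>\<^bsub>pow_group G n\<^esub> g" if u: "u \<in> H" for u
  proof -
    obtain y where "y \<in> Y" "u \<otimes>\<^bsub>pow_group G n\<^esub> y \<in> Y"
      and "\<forall>a \<in> set u \<union> set g. set y \<subseteq> centralizer G a"
      using pair[OF u] by blast
    with u Y(2) HP show ?thesis
      by (intro eval_word_eq_one_of_centralizing_translate[OF w g]) auto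
  qed
  obtain y where "y \<in> Y" using pair[OF subgroup.one_closed[OF H]] by blast
  with Y(2) have "y \<in> H" "eval_word G w y g = c" by auto
  with const show ?thesis by simp
qed

theorem corollary3p4:
  fixes G1 :: "('a, 'b) monoid_scheme"
    and k n m :: nat
    and G :: "'a list set"
    and A :: "'a list set set"
    and \<mu> :: "'a list set \<Rightarrow> real"
    and w :: word
    and g :: "'a list"
    and c :: 'a
  assumes "group G1"
    and "k \<ge> 1"
    and "\<forall>a \<in> carrier G1. finite (rcosets\<^bsub>G1\<^esub> (centralizer G1 a))
                            \<and> card (rcosets\<^bsub>G1\<^esub> (centralizer G1 a)) \<le> k"
    and "subgroup G (pow_group G1 n)"
    and "prob_measure_on_algebra G A \<mu>"
    and "left_invariant (pow_group G1 n) G A \<mu>"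
    and "word_in_vars n m w"
    and "length g = m" and "set g \<subseteq> carrier G1"
    and "c \<in> carrier G1"
    and "\<not> (\<forall>h \<in> G. eval_word G1 w h g = c)"
  shows "inner_measure A \<mu> {h \<in> G. eval_word G1 w h g = c}
           \<le> 1 - 1 / (2 * real k ^ (n^2 + m * n))"
proof -
  interpret G1: group G1 by fact
  have bounded: "\<forall>a \<in> carrier G1. finite (conj_class G1 a) \<and> card (conj_class G1 a) \<le> k"
    using assms(3) G1.finite_conj_class_iff G1.card_conj_class by simp
  have "n^2 + m * n = n * (n + m)" by (simp add: power2_eq_square algebra_simps)
  then have "\<mu> Y \<le> 1 - 1 / (2 * real k ^ (n^2 + m * n))"
    if "Y \<in> A" "Y \<subseteq> {h \<in> G. eval_word G1 w h g = c}" for Y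
    using G1.eval_word_constant_on_large_subset[OF assms(2) bounded assms(4-9) that] assms(11)
    by fastforce
  moreover have "{} \<in> A"
    using prob_measure_on_algebraD(1)[OF assms(5)] by (simp add: algebra_iff_Un)
  ultimately show ?thesis
    unfolding inner_measure_def by (intro cSup_least) auto
qed

end
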